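(* For every integer $n\ge 2$, the origami flip graph ${\rm OFG}(M_{2,n})$ has exactly $8(n+1)3^{n-3}$ edges.
   Context: The $2\times n$ Miura-ori $M_{2,n}$ ($n\ge 1$) has faces $\alpha_{i,j}$ ($i\in\{1,2\}$ row, $j\in\{1,\dots,n\}$ column), interior vertices $x_1,\dots,x_{n-1}$, and creases $e_0$ and $e_{3k-1},e_{3k},e_{3k+1}$ for $k=1,\dots,n-1$. At $x_k$ the incident creases are left $e_{3k-3}$, top $e_{3k-1}$, right $e_{3k}$, bottom $e_{3k+1}$ (the two sector angles adjacent to the left crease are obtuse, the others acute). Face $\alpha_{1,j}$ is bordered by those of $e_{3j-4}$ (iff $j\ge2$), $e_{3j-3}$, $e_{3j-1}$ (iff $j\le n-1$); face $\alpha_{2,j}$ by those of $e_{3j-2}$ (iff $j\ge2$), $e_{3j-3}$, $e_{3j+1}$ (iff $j\le n-1$). An MV assignment is a map $\mu$ from the creases to $\{1,-1\}$ (mountain/valley); it is locally valid if for each $k$ exactly one of $\mu(e_{3k-1}),\mu(e_{3k}),\mu(e_{3k+1})$ differs from $\mu(e_{3k-3})$. The face flip $\mu_\alpha$ negates $\mu$ exactly on the creases bordering face $\alpha$; $\alpha$ is flippable under $\mu$ if $\mu$ and $\mu_\alpha$ are both locally valid. ${\rm OFG}(M_{2,n})$ has the locally valid MV assignments as vertices, with $\mu\sim\mu_\alpha$ for each flippable $\alpha$. *)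

theory Defs
  imports Complex_Main
begin

text \<open>The 2 x n Miura-ori M_{2,n}. Creases e_c are indexed by natural numbers c:
  e_0 and e_{3k-1}, e_{3k}, e_{3k+1} for k = 1..n-1.\<close>

definition creases :: "nat \<Rightarrow> nat set" where
  "creases n = {0} \<union> (\<Union>k\<in>{1..n-1}. {3*k-1, 3*k, 3*k+1})"

definition faces :: "nat \<Rightarrow> (nat \<times> nat) set" where
  "faces n = {1,2} \<times> {1..n}"

definition face_border :: "nat \<Rightarrow> nat \<times> nat \<Rightarrow> nat set" where
  "face_border n f = (case f of (i, j) \<Rightarrow>
     if i = 1 then
       (if 2 \<le> j then {3*j-4} else {}) \<union> {3*j-3} \<union> (if j \<le> n-1 then {3*j-1} else {})
     else
       (if 2 \<le> j then {3*j-2} else {}) \<union> {3*j-3} \<union> (if j \<le> n-1 then {3*j+1} else {}))"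

text \<open>MV assignments: maps from the creases to {1,-1} (extended by 0 outside
  the crease set so that they are determined by their values on the creases).\<close>

definition mv_assignments :: "nat \<Rightarrow> (nat \<Rightarrow> int) set" where
  "mv_assignments n = {\<mu>. (\<forall>c\<in>creases n. \<mu> c \<in> {1, -1}) \<and> (\<forall>c. c \<notin> creases n \<longrightarrow> \<mu> c = 0)}"

text \<open>Local validity: at each interior vertex x_k exactly one of the creases
  e_{3k-1}, e_{3k}, e_{3k+1} has a value different from that of e_{3k-3}.\<close>

definition locally_valid :: "nat \<Rightarrow> (nat \<Rightarrow> int) \<Rightarrow> bool" where
  "locally_valid n \<mu> \<longleftrightarrow> \<mu> \<in> mv_assignments n \<and>
     (\<forall>k\<in>{1..n-1}. card {c \<in> {3*k-1, 3*k, 3*k+1}. \<mu> c \<noteq> \<mu> (3*k-3)} = 1)"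

definition face_flip :: "nat \<Rightarrow> (nat \<Rightarrow> int) \<Rightarrow> nat \<times> nat \<Rightarrow> (nat \<Rightarrow> int)" where
  "face_flip n \<mu> f = (\<lambda>c. if c \<in> face_border n f then - \<mu> c else \<mu> c)"

definition flippable :: "nat \<Rightarrow> (nat \<Rightarrow> int) \<Rightarrow> nat \<times> nat \<Rightarrow> bool" where
  "flippable n \<mu> f \<longleftrightarrow> f \<in> faces n \<and> locally_valid n \<mu> \<and> locally_valid n (face_flip n \<mu> f)"

definition OFG_vertices :: "nat \<Rightarrow> (nat \<Rightarrow> int) set" where
  "OFG_vertices n = {\<mu>. locally_valid n \<mu>}"

definition OFG_edges :: "nat \<Rightarrow> (nat \<Rightarrow> int) set set" where
  "OFG_edges n = {{\<mu>, face_flip n \<mu> f} | \<mu> f. flippable n \<mu> f}"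

end

(*
  A locally valid assignment is determined by its value on e_0 together with, at each interior
  vertex, which of the three non-left creases is the one differing from the left crease (so
  there are 2 * 3^(n-1) of them).  Flipping the face alpha_{i,j}
  changes creases at x_{j-1} and x_j only, and such a vertex stays valid iff its code avoids one
  value determined by the face.  Hence, for fixed alpha, the assignments under which alpha is
  flippable and which are mountain on its crease e_{3j-3} correspond to codes with two choices at
  the touched vertices and three elsewhere.  As mu and mu_alpha differ on e_{3j-3}, every edge
  arises from exactly one such pair.  The end faces (j = 1, n) touch one vertex, the others two,
  which gives 2 (2 * 2 * 3^(n-2) + (n-2) * 4 * 3^(n-3)) = 8 (n+1) 3^(n-3) edges.
*)
theory Submission
  imports Defs "HOL-Library.FuncSet"
begin

lemma card_filter_triple_eq_1_iff:
  assumes "a \<noteq> b" "a \<noteq> c" "b \<noteq> c"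
  shows "card {x \<in> {a, b, c}. P x} = 1 \<longleftrightarrow>
    (P a \<and> \<not> P b \<and> \<not> P c) \<or> (\<not> P a \<and> P b \<and> \<not> P c) \<or> (\<not> P a \<and> \<not> P b \<and> P c)"
proof -
  have e: "{x \<in> {a, b, c}. P x} =
      (if P a then {a} else {}) \<union> (if P b then {b} else {}) \<union> (if P c then {c} else {})"
    by auto
  show ?thesis
    unfolding e using assms by (cases "P a"; cases "P b"; cases "P c") simp_all
qed

lemma bij_betw_Collect_preimage:
  assumes "bij_betw f A B" and "C \<subseteq> B"
  shows "bij_betw f {x \<in> A. f x \<in> C} C"
proof (rule bij_betw_subset[OF assms(1)])
  show "f ` {x \<in> A. f x \<in> C} = C"
    using assms by (auto simp: bij_betw_def)
qed auto

section \<open>Local validity at the interior vertices\<close>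

lemma mem_creases_iff: "c \<in> creases n \<longleftrightarrow> c = 0 \<or> (2 \<le> c \<and> c + 2 \<le> 3 * n)"
proof
  assume "c = 0 \<or> (2 \<le> c \<and> c + 2 \<le> 3 * n)"
  moreover have "c \<in> {3 * k - 1, 3 * k, 3 * k + 1}" and "k \<in> {1..n - 1}"
    if "2 \<le> c" "c + 2 \<le> 3 * n" and "k = (c + 1) div 3" for k
    using that by auto
  ultimately show "c \<in> creases n"
    unfolding creases_def by blast
qed (auto simp: creases_def)

(* Vertex x_{q+1} has left, top, right and bottom creases 3q, 3q+2, 3q+3, 3q+4;
   counting the vertices from 0 avoids truncated subtraction. *)
lemma vertex_creases_mem:
  assumes "q + 1 < n"
  shows "3*q \<in> creases n" "3*q+2 \<in> creases n" "3*q+3 \<in> creases n" "3*q+4 \<in> creases n"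
  using assms by (auto simp: mem_creases_iff)

lemma creases_cases:
  assumes "c \<in> creases n" and "0 < n"
  obtains (spine) k where "k < n" "c = 3*k"
    | (top) q where "q + 1 < n" "c = 3*q+2"
    | (bottom) q where "q + 1 < n" "c = 3*q+4"
proof -
  have c: "c = 0 \<or> (2 \<le> c \<and> c + 2 \<le> 3*n)"
    using assms(1) by (simp add: mem_creases_iff)
  have "c mod 3 = 0 \<or> c mod 3 = 2 \<or> c mod 3 = 1"
    by presburger
  then show ?thesis
  proof (elim disjE)
    assume "c mod 3 = 0"
    then have "c div 3 < n" "c = 3 * (c div 3)"
      using c assms(2) by presburger+
    then show ?thesis by (rule spine)
  next
    assume "c mod 3 = 2"
    then have "c div 3 + 1 < n" "c = 3 * (c div 3) + 2"
      using c by presburger+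
    then show ?thesis by (rule top)
  next
    assume "c mod 3 = 1"
    then have "c div 3 - 1 + 1 < n" "c = 3 * (c div 3 - 1) + 4"
      using c by presburger+
    then show ?thesis by (rule bottom)
  qed
qed

definition one_differs :: "int \<Rightarrow> int \<Rightarrow> int \<Rightarrow> int \<Rightarrow> bool" where
  "one_differs l a b c \<longleftrightarrow>
     (a \<noteq> l \<and> b = l \<and> c = l) \<or> (a = l \<and> b \<noteq> l \<and> c = l) \<or> (a = l \<and> b = l \<and> c \<noteq> l)"

lemma locally_valid_iff:
  "locally_valid n \<mu> \<longleftrightarrow> \<mu> \<in> mv_assignments n \<and>
     (\<forall>q. q + 1 < n \<longrightarrow> one_differs (\<mu> (3*q)) (\<mu> (3*q+2)) (\<mu> (3*q+3)) (\<mu> (3*q+4)))"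
proof -
  have "card {c \<in> {3*k-1, 3*k, 3*k+1}. \<mu> c \<noteq> \<mu> (3*k-3)} = 1 \<longleftrightarrow>
      one_differs (\<mu> (3*q)) (\<mu> (3*q+2)) (\<mu> (3*q+3)) (\<mu> (3*q+4))" if "k = Suc q" for k q
  proof -
    have "3*k-1 = 3*q+2" "3*k = 3*q+3" "3*k+1 = 3*q+4" "3*k-3 = 3*q"
      using that by simp_all
    then show ?thesis
      unfolding one_differs_def
      by (simp only:) (subst card_filter_triple_eq_1_iff; simp)
  qed
  moreover have "(\<forall>k\<in>{1..n-1}. Q k) \<longleftrightarrow> (\<forall>q. q + 1 < n \<longrightarrow> Q (Suc q))" for Q
  proof (intro iffI ballI allI impI)
    fix k assume "\<forall>q. q + 1 < n \<longrightarrow> Q (Suc q)" and "k \<in> {1..n-1}"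
    then show "Q k"
      by (cases n) (auto dest: spec[of _ "k - 1"])
  qed auto
  ultimately show ?thesis
    unfolding locally_valid_def by auto
qed

lemma locally_valid_crease_value:
  "locally_valid n \<mu> \<Longrightarrow> c \<in> creases n \<Longrightarrow> \<mu> c \<in> {1, -1}"
  by (simp add: locally_valid_iff mv_assignments_def)

section \<open>Valid assignments as vertex codes\<close>

(* Codes 0, 1, 2: the top, right or bottom crease is the one differing from the left one. *)
definition differing_crease :: "int \<Rightarrow> int \<Rightarrow> int \<Rightarrow> nat" where
  "differing_crease l a b = (if a \<noteq> l then 0 else if b \<noteq> l then 1 else 2)"

definition vertex_code :: "nat \<Rightarrow> (nat \<Rightarrow> int) \<Rightarrow> nat \<Rightarrow> nat" where
  "vertex_code n \<mu> = (\<lambda>q\<in>{..<n-1}. differing_crease (\<mu> (3*q)) (\<mu> (3*q+2)) (\<mu> (3*q+3)))"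

definition vertex_codes :: "nat \<Rightarrow> (nat \<Rightarrow> nat) set" where
  "vertex_codes n = {..<n-1} \<rightarrow>\<^sub>E {0, 1, 2}"

lemma vertex_code_mem: "vertex_code n \<mu> \<in> vertex_codes n"
  by (simp add: vertex_code_def vertex_codes_def differing_crease_def)

definition sign_if :: "bool \<Rightarrow> int" where
  "sign_if b = (if b then -1 else 1)"

(* The spine creases e_{3k} run between the two rows; crossing a vertex reverses the spine
   crease exactly when its right crease is the differing one. *)
definition spine_sign :: "(nat \<Rightarrow> nat) \<Rightarrow> nat \<Rightarrow> int" where
  "spine_sign t k = (\<Prod>q<k. sign_if (t q = 1))"

lemma spine_sign_0 [simp]: "spine_sign t 0 = 1"
  by (simp add: spine_sign_def)

lemma spine_sign_Suc: "spine_sign t (Suc k) = spine_sign t k * sign_if (t k = 1)"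
  by (simp add: spine_sign_def)

lemma spine_sign_pm: "spine_sign t k \<in> {1, -1}"
  by (induction k) (auto simp: spine_sign_Suc sign_if_def)

lemma spine_sign_sq [simp]: "spine_sign t k * spine_sign t k = 1"
  using spine_sign_pm[of t k] by auto

lemma spine_sign_nonzero [simp]: "spine_sign t k \<noteq> 0"
  using spine_sign_pm[of t k] by auto

definition assignment_of :: "nat \<Rightarrow> int \<Rightarrow> (nat \<Rightarrow> nat) \<Rightarrow> nat \<Rightarrow> int" where
  "assignment_of n s t c =
     (if c \<notin> creases n then 0
      else if c mod 3 = 0 then s * spine_sign t (c div 3)
      else if c mod 3 = 2 then s * spine_sign t (c div 3) * sign_if (t (c div 3) = 0)
      else s * spine_sign t (c div 3 - 1) * sign_if (t (c div 3 - 1) = 2))"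

lemma assignment_of_spine:
  "k < n \<Longrightarrow> assignment_of n s t (3 * k) = s * spine_sign t k"
  by (simp add: assignment_of_def mem_creases_iff)

lemma assignment_of_top:
  assumes "q + 1 < n"
  shows "assignment_of n s t (3*q+2) = s * spine_sign t q * sign_if (t q = 0)"
proof -
  have "3*q+2 \<in> creases n"
    using assms by (simp add: mem_creases_iff)
  moreover have "(3*q+2) mod 3 = 2" "(3*q+2) div 3 = q"
    by presburger+
  ultimately show ?thesis
    by (simp only: assignment_of_def if_True if_False not_True_eq_False) simp
qed

lemma assignment_of_right:
  assumes "q + 1 < n"
  shows "assignment_of n s t (3*q+3) = s * spine_sign t q * sign_if (t q = 1)"
proof -
  have "assignment_of n s t (3 * Suc q) = s * spine_sign t (Suc q)"
    using assms by (intro assignment_of_spine) simp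
  then show ?thesis
    by (simp add: spine_sign_Suc mult.assoc add.commute)
qed

lemma assignment_of_bottom:
  assumes "q + 1 < n"
  shows "assignment_of n s t (3*q+4) = s * spine_sign t q * sign_if (t q = 2)"
proof -
  have "3*q+4 \<in> creases n"
    using assms by (simp add: mem_creases_iff)
  moreover have "(3*q+4) mod 3 = 1" "(3*q+4) div 3 = Suc q"
    by presburger+
  ultimately show ?thesis
    by (simp only: assignment_of_def if_True if_False not_True_eq_False) simp
qed

lemma one_differs_sign_if:
  "l \<noteq> 0 \<Longrightarrow> (x::nat) \<in> {0, 1, 2} \<Longrightarrow>
    one_differs l (l * sign_if (x = 0)) (l * sign_if (x = 1)) (l * sign_if (x = 2))"
  by (auto simp: one_differs_def sign_if_def)

lemma differing_crease_sign_if: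
  "l \<noteq> 0 \<Longrightarrow> x \<in> {0, 1, 2} \<Longrightarrow> differing_crease l (l * sign_if (x = 0)) (l * sign_if (x = 1)) = x"
  by (auto simp: differing_crease_def sign_if_def)

lemma one_differs_imp_sign_if:
  assumes "one_differs l a b c" and "l \<in> {1, -1}" "a \<in> {1, -1}" "b \<in> {1, -1}" "c \<in> {1, -1}"
  shows "a = l * sign_if (differing_crease l a b = 0)" "b = l * sign_if (differing_crease l a b = 1)"
    "c = l * sign_if (differing_crease l a b = 2)"
  using assms unfolding one_differs_def sign_if_def differing_crease_def by auto

lemma locally_valid_assignment_of:
  assumes "s \<in> {1, -1}" and "t \<in> vertex_codes n"
  shows "locally_valid n (assignment_of n s t)"
  unfolding locally_valid_iff
proof (intro conjI allI impI)
  have "s * spine_sign t k \<in> {1, -1}" "s * spine_sign t k * sign_if b \<in> {1, -1}" for k b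
    using assms(1) spine_sign_pm[of t k] by (auto simp: sign_if_def)
  then show "assignment_of n s t \<in> mv_assignments n"
    unfolding mv_assignments_def assignment_of_def by simp
next
  fix q assume q: "q + 1 < n"
  have "s * spine_sign t q \<noteq> 0"
    using assms(1) by auto
  moreover have "t q \<in> {0, 1, 2}"
    using PiE_mem[OF assms(2)[unfolded vertex_codes_def]] q by simp
  ultimately have "one_differs (s * spine_sign t q) (s * spine_sign t q * sign_if (t q = 0))
      (s * spine_sign t q * sign_if (t q = 1)) (s * spine_sign t q * sign_if (t q = 2))"
    by (rule one_differs_sign_if)
  then show "one_differs (assignment_of n s t (3*q)) (assignment_of n s t (3*q+2))
      (assignment_of n s t (3*q+3)) (assignment_of n s t (3*q+4))"
    using q by (simp only: assignment_of_spine assignment_of_top assignment_of_right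
        assignment_of_bottom add_lessD1)
qed

lemma vertex_code_assignment_of:
  assumes "s \<in> {1, -1}" and "t \<in> vertex_codes n"
  shows "vertex_code n (assignment_of n s t) = t"
proof
  fix q
  show "vertex_code n (assignment_of n s t) q = t q"
  proof (cases "q + 1 < n")
    case True
    have "s * spine_sign t q \<noteq> 0"
      using assms(1) by auto
    moreover have "t q \<in> {0, 1, 2}"
      using PiE_mem[OF assms(2)[unfolded vertex_codes_def]] True by simp
    ultimately have "differing_crease (s * spine_sign t q) (s * spine_sign t q * sign_if (t q = 0))
        (s * spine_sign t q * sign_if (t q = 1)) = t q"
      by (rule differing_crease_sign_if)
    moreover have "q \<in> {..<n-1}"
      using True by simp
    ultimately show ?thesis
      unfolding vertex_code_def using True
      by (simp only: restrict_apply' assignment_of_spine assignment_of_top assignment_of_right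
          add_lessD1)
  next
    case False
    then have "q \<notin> {..<n-1}"
      by simp
    then show ?thesis
      using PiE_arb[OF assms(2)[unfolded vertex_codes_def]] by (simp add: vertex_code_def)
  qed
qed

lemma locally_valid_vertex_signs:
  assumes "locally_valid n \<mu>" and "q + 1 < n"
  shows "\<mu> (3*q+2) = \<mu> (3*q) * sign_if (vertex_code n \<mu> q = 0)"
    and "\<mu> (3*q+3) = \<mu> (3*q) * sign_if (vertex_code n \<mu> q = 1)"
    and "\<mu> (3*q+4) = \<mu> (3*q) * sign_if (vertex_code n \<mu> q = 2)"
proof -
  have "one_differs (\<mu> (3*q)) (\<mu> (3*q+2)) (\<mu> (3*q+3)) (\<mu> (3*q+4))"
    using assms by (simp add: locally_valid_iff)
  note signs = one_differs_imp_sign_if[OF this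
      locally_valid_crease_value[OF assms(1) vertex_creases_mem(1)[OF assms(2)]]
      locally_valid_crease_value[OF assms(1) vertex_creases_mem(2)[OF assms(2)]]
      locally_valid_crease_value[OF assms(1) vertex_creases_mem(3)[OF assms(2)]]
      locally_valid_crease_value[OF assms(1) vertex_creases_mem(4)[OF assms(2)]]]
  have "vertex_code n \<mu> q = differing_crease (\<mu> (3*q)) (\<mu> (3*q+2)) (\<mu> (3*q+3))"
    using assms(2) by (simp add: vertex_code_def less_diff_conv)
  then show "\<mu> (3*q+2) = \<mu> (3*q) * sign_if (vertex_code n \<mu> q = 0)"
    and "\<mu> (3*q+3) = \<mu> (3*q) * sign_if (vertex_code n \<mu> q = 1)"
    and "\<mu> (3*q+4) = \<mu> (3*q) * sign_if (vertex_code n \<mu> q = 2)"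
    using signs by simp_all
qed

lemma locally_valid_spine_values:
  assumes "locally_valid n \<mu>" and "k < n"
  shows "\<mu> (3*k) = \<mu> 0 * spine_sign (vertex_code n \<mu>) k"
  using assms(2)
proof (induction k)
  case (Suc k)
  then have "\<mu> (3 * Suc k) = \<mu> (3*k) * sign_if (vertex_code n \<mu> k = 1)"
    using locally_valid_vertex_signs(2)[OF assms(1), of k] by (simp add: add.commute)
  then show ?case
    using Suc by (simp add: spine_sign_Suc mult.assoc)
qed simp

lemma assignment_of_vertex_code:
  assumes "locally_valid n \<mu>" and "0 < n"
  shows "assignment_of n (\<mu> 0) (vertex_code n \<mu>) = \<mu>"
proof
  fix c
  show "assignment_of n (\<mu> 0) (vertex_code n \<mu>) c = \<mu> c"
  proof (cases "c \<in> creases n")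
    case True
    then show ?thesis
      using assms(2)
    proof (cases rule: creases_cases)
      case (spine k)
      then show ?thesis
        using locally_valid_spine_values[OF assms(1)] by (simp add: assignment_of_spine)
    next
      case (top q)
      then show ?thesis
        unfolding top(2) assignment_of_top[OF top(1)]
        using locally_valid_spine_values[OF assms(1), of q] locally_valid_vertex_signs[OF assms(1)]
        by simp
    next
      case (bottom q)
      then show ?thesis
        unfolding bottom(2) assignment_of_bottom[OF bottom(1)]
        using locally_valid_spine_values[OF assms(1), of q] locally_valid_vertex_signs[OF assms(1)]
        by simp
    qed
  next
    case False
    then show ?thesis
      using assms(1) by (simp add: assignment_of_def locally_valid_iff mv_assignments_def)
  qed
qed

lemma spine_sign_eq_vertex_code:
  assumes "locally_valid n \<mu>" and "k < n" and "\<mu> (3*k) = 1"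
  shows "\<mu> 0 = spine_sign (vertex_code n \<mu>) k"
proof -
  let ?s = "spine_sign (vertex_code n \<mu>) k"
  have "\<mu> 0 * ?s * ?s = ?s"
    using locally_valid_spine_values[OF assms(1,2)] assms(3) by simp
  then show ?thesis
    by (simp add: mult.assoc)
qed

lemma bij_betw_vertex_code:
  assumes "k < n"
  shows "bij_betw (vertex_code n) {\<mu>. locally_valid n \<mu> \<and> \<mu> (3*k) = 1} (vertex_codes n)"
proof (rule bij_betw_imageI)
  show "inj_on (vertex_code n) {\<mu>. locally_valid n \<mu> \<and> \<mu> (3*k) = 1}"
  proof (rule inj_onI)
    fix \<mu> \<nu>
    assume \<mu>: "\<mu> \<in> {\<mu>. locally_valid n \<mu> \<and> \<mu> (3*k) = 1}" and \<nu>: "\<nu> \<in> {\<mu>. locally_valid n \<mu> \<and> \<mu> (3*k) = 1}"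
      and codes: "vertex_code n \<mu> = vertex_code n \<nu>"
    have "\<mu> = assignment_of n (\<mu> 0) (vertex_code n \<mu>)"
      using \<mu> assms by (simp add: assignment_of_vertex_code)
    also have "\<dots> = assignment_of n (\<nu> 0) (vertex_code n \<nu>)"
      using spine_sign_eq_vertex_code[of n \<mu> k] spine_sign_eq_vertex_code[of n \<nu> k] \<mu> \<nu> assms codes
      by simp
    also have "\<dots> = \<nu>"
      using \<nu> assms by (simp add: assignment_of_vertex_code)
    finally show "\<mu> = \<nu>" .
  qed
  show "vertex_code n ` {\<mu>. locally_valid n \<mu> \<and> \<mu> (3*k) = 1} = vertex_codes n"
  proof (intro equalityI subsetI)
    fix t assume t: "t \<in> vertex_codes n"
    define \<mu> where "\<mu> = assignment_of n (spine_sign t k) t"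
    have "locally_valid n \<mu>" "\<mu> (3*k) = 1" "vertex_code n \<mu> = t"
      unfolding \<mu>_def using spine_sign_pm[of t k] t assms
      by (simp_all add: locally_valid_assignment_of assignment_of_spine vertex_code_assignment_of)
    then show "t \<in> vertex_code n ` {\<mu>. locally_valid n \<mu> \<and> \<mu> (3*k) = 1}"
      by blast
  qed (auto simp: vertex_code_mem)
qed

section \<open>Flippable faces\<close>

lemma mem_face_border_iff:
  assumes "(i, j) \<in> faces n"
  shows "c \<in> face_border n (i, j) \<longleftrightarrow>
    (if i = 1 then (2 \<le> j \<and> c + 4 = 3*j) \<or> c + 3 = 3*j \<or> (j < n \<and> c + 1 = 3*j)
     else (2 \<le> j \<and> c + 2 = 3*j) \<or> c + 3 = 3*j \<or> (j < n \<and> c = 3*j + 1))"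
  using assms unfolding face_border_def faces_def by auto

lemma face_border_subset_creases: "f \<in> faces n \<Longrightarrow> face_border n f \<subseteq> creases n"
  by (cases f) (auto simp: mem_face_border_iff mem_creases_iff faces_def split: if_splits; presburger)

lemma spine_crease_mem_face_border: "(i, j) \<in> faces n \<Longrightarrow> 3*j - 3 \<in> face_border n (i, j)"
  by (auto simp: mem_face_border_iff faces_def)

lemma face_flip_face_flip [simp]: "face_flip n (face_flip n \<mu> f) f = \<mu>"
  by (simp add: face_flip_def fun_eq_iff)

lemma face_flip_mem_mv_assignments:
  "\<mu> \<in> mv_assignments n \<Longrightarrow> f \<in> faces n \<Longrightarrow> face_flip n \<mu> f \<in> mv_assignments n"
  using face_border_subset_creases[of f n] by (auto simp: mv_assignments_def face_flip_def)

lemma face_flip_at_vertex: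
  assumes "(i, j) \<in> faces n" and "q + 1 < n"
  shows "face_flip n \<mu> (i, j) (3*q) = (if q + 1 = j then - \<mu> (3*q) else \<mu> (3*q))"
    and "face_flip n \<mu> (i, j) (3*q+2) =
      (if i = 1 \<and> (q + 1 = j \<or> q + 2 = j) then - \<mu> (3*q+2) else \<mu> (3*q+2))"
    and "face_flip n \<mu> (i, j) (3*q+3) = (if q + 2 = j then - \<mu> (3*q+3) else \<mu> (3*q+3))"
    and "face_flip n \<mu> (i, j) (3*q+4) =
      (if i \<noteq> 1 \<and> (q + 1 = j \<or> q + 2 = j) then - \<mu> (3*q+4) else \<mu> (3*q+4))"
  using assms unfolding face_flip_def mem_face_border_iff[OF assms(1)]
  by (simp_all add: faces_def; presburger)+

(* Negating two creases at a vertex toggles whether two of the three non-left creases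
   differ from the left one; the vertex stays valid iff the differing crease is the third. *)
lemma one_differs_negate_two_iff:
  assumes "one_differs l a b c" and "l \<in> {1, -1}" "a \<in> {1, -1}" "b \<in> {1, -1}" "c \<in> {1, -1}"
  shows "one_differs (-l) (-a) b c \<longleftrightarrow> differing_crease l a b \<noteq> 0"
    and "one_differs (-l) a b (-c) \<longleftrightarrow> differing_crease l a b \<noteq> 2"
    and "one_differs l (-a) (-b) c \<longleftrightarrow> differing_crease l a b \<noteq> 2"
    and "one_differs l a (-b) (-c) \<longleftrightarrow> differing_crease l a b \<noteq> 0"
  using assms by (auto simp: one_differs_def differing_crease_def)

(* At x_{q+1} the face alpha_{i,j} is the left neighbour if q + 1 = j, the right one if q + 2 = j. *)
definition allowed_codes :: "nat \<Rightarrow> nat \<Rightarrow> nat \<Rightarrow> nat set" where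
  "allowed_codes i j q = {0, 1, 2}
     - (if q + 1 = j then {if i = 1 then 0 else 2} else {})
     - (if q + 2 = j then {if i = 1 then 2 else 0} else {})"

definition flip_codes :: "nat \<Rightarrow> nat \<Rightarrow> nat \<Rightarrow> (nat \<Rightarrow> nat) set" where
  "flip_codes n i j = PiE {..<n-1} (allowed_codes i j)"

lemma one_differs_face_flip_iff:
  assumes "locally_valid n \<mu>" and "(i, j) \<in> faces n" and "q + 1 < n"
  shows "one_differs (face_flip n \<mu> (i, j) (3*q)) (face_flip n \<mu> (i, j) (3*q+2))
      (face_flip n \<mu> (i, j) (3*q+3)) (face_flip n \<mu> (i, j) (3*q+4)) \<longleftrightarrow>
    differing_crease (\<mu> (3*q)) (\<mu> (3*q+2)) (\<mu> (3*q+3)) \<in> allowed_codes i j q"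
proof -
  have valid: "one_differs (\<mu> (3*q)) (\<mu> (3*q+2)) (\<mu> (3*q+3)) (\<mu> (3*q+4))"
    using assms(1,3) by (simp add: locally_valid_iff)
  note flips = one_differs_negate_two_iff[OF valid
      locally_valid_crease_value[OF assms(1) vertex_creases_mem(1)[OF assms(3)]]
      locally_valid_crease_value[OF assms(1) vertex_creases_mem(2)[OF assms(3)]]
      locally_valid_crease_value[OF assms(1) vertex_creases_mem(3)[OF assms(3)]]
      locally_valid_crease_value[OF assms(1) vertex_creases_mem(4)[OF assms(3)]]]
  have "differing_crease l a b \<in> {0, 1, 2}" for l a b
    by (simp add: differing_crease_def)
  moreover have "i = 1 \<or> i = 2"
    using assms(2) by (simp add: faces_def)
  ultimately show ?thesis
    unfolding face_flip_at_vertex[OF assms(2,3)] allowed_codes_def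
    using valid flips by auto
qed

lemma locally_valid_face_flip_iff:
  assumes "locally_valid n \<mu>" and "(i, j) \<in> faces n"
  shows "locally_valid n (face_flip n \<mu> (i, j)) \<longleftrightarrow> vertex_code n \<mu> \<in> flip_codes n i j"
proof -
  have "face_flip n \<mu> (i, j) \<in> mv_assignments n"
    using assms by (simp add: locally_valid_iff face_flip_mem_mv_assignments)
  then have "locally_valid n (face_flip n \<mu> (i, j)) \<longleftrightarrow>
      (\<forall>q. q + 1 < n \<longrightarrow> differing_crease (\<mu> (3*q)) (\<mu> (3*q+2)) (\<mu> (3*q+3)) \<in> allowed_codes i j q)"
    using one_differs_face_flip_iff[OF assms] by (simp add: locally_valid_iff)
  also have "\<dots> \<longleftrightarrow> vertex_code n \<mu> \<in> flip_codes n i j"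
    by (auto simp: flip_codes_def vertex_code_def less_diff_conv)
  finally show ?thesis .
qed

lemma bij_betw_vertex_code_flippable:
  assumes "(i, j) \<in> faces n"
  shows "bij_betw (vertex_code n) {\<mu>. flippable n \<mu> (i, j) \<and> \<mu> (3*j - 3) = 1} (flip_codes n i j)"
proof -
  have j: "j - 1 < n" "3 * (j - 1) = 3*j - 3"
    using assms by (auto simp: faces_def)
  have flippable_eq: "{\<mu>. flippable n \<mu> (i, j) \<and> \<mu> (3*j - 3) = 1} =
      {\<mu> \<in> {\<mu>. locally_valid n \<mu> \<and> \<mu> (3 * (j - 1)) = 1}. vertex_code n \<mu> \<in> flip_codes n i j}"
    using assms j(2) by (auto simp: flippable_def locally_valid_face_flip_iff)
  have "flip_codes n i j \<subseteq> vertex_codes n"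
    unfolding flip_codes_def vertex_codes_def by (rule PiE_mono) (auto simp: allowed_codes_def)
  then show ?thesis
    unfolding flippable_eq by (rule bij_betw_Collect_preimage[OF bij_betw_vertex_code[OF j(1)]])
qed

section \<open>Counting the edges\<close>

lemma card_allowed_codes: "card (allowed_codes i j q) = (if q + 1 = j \<or> q + 2 = j then 2 else 3)"
proof -
  consider "q + 1 = j" | "q + 2 = j" | "q + 1 \<noteq> j" "q + 2 \<noteq> j"
    by blast
  then show ?thesis
    by cases (auto simp: allowed_codes_def)
qed

lemma card_flip_codes:
  assumes "(i, j) \<in> faces n" and "2 \<le> n"
  shows "3 * card (flip_codes n i j) = (if j = 1 \<or> j = n then 6 else 4) * 3 ^ (n - 2)"
proof -
  let ?A = "{..<n-1}" and ?P = "\<lambda>q. q + 1 = j \<or> q + 2 = j"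
  define touched where "touched = (if j = 1 then {0} else if j = n then {n - 2} else {j - 2, j - 1})"
  have j: "1 \<le> j" "j \<le> n"
    using assms(1) by (auto simp: faces_def)
  have touched: "?A \<inter> {q. ?P q} = touched" "?A \<inter> - {q. ?P q} = ?A - touched"
    using j assms(2) by (auto simp: touched_def)
  have "card (flip_codes n i j) = (\<Prod>q\<in>?A. if ?P q then 2 else 3)"
    by (simp add: flip_codes_def card_PiE card_allowed_codes)
  also have "\<dots> = 2 ^ card touched * 3 ^ card (?A - touched)"
    by (simp only: prod.If_cases[OF finite_lessThan] touched prod_constant)
  finally have card_eq: "card (flip_codes n i j) = 2 ^ card touched * 3 ^ card (?A - touched)" .
  have "touched \<subseteq> ?A"
    using j assms(2) by (auto simp: touched_def)
  then have "card (?A - touched) = n - 1 - card touched"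
    by (simp add: card_Diff_subset finite_subset)
  moreover have "card touched = (if j = 1 \<or> j = n then 1 else 2)"
    using j assms(2) by (auto simp: touched_def)
  moreover have "n - 2 = Suc (n - 3)" if "j \<noteq> 1" "j \<noteq> n"
    using that j by auto
  ultimately show ?thesis
    using card_eq assms(2) by (auto simp: numeral_eq_Suc)
qed

lemma sum_end_weights:
  assumes "2 \<le> n"
  shows "(\<Sum>j=1..n. if j = 1 \<or> j = n then 6 else 4 :: nat) = 4 * (n + 1)"
proof -
  have "{1..n} \<inter> {j. j = 1 \<or> j = n} = {1, n}" "{1..n} \<inter> - {j. j = 1 \<or> j = n} = {1..n} - {1, n}"
    using assms by auto
  moreover have "card {1, n} = 2" "card ({1..n} - {1, n}) = n - 2"
    using assms by (auto simp: card_Diff_subset)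
  ultimately show ?thesis
    using assms by (simp add: sum.If_cases algebra_simps)
qed

(* Every edge {mu, mu_alpha} comes from exactly one such pair, since e_{3j-3} borders alpha_{i,j}. *)
definition positive_flips :: "nat \<Rightarrow> ((nat \<times> nat) \<times> (nat \<Rightarrow> int)) set" where
  "positive_flips n = (SIGMA f:faces n. {\<mu>. flippable n \<mu> f \<and> \<mu> (3 * snd f - 3) = 1})"

lemma card_positive_flips:
  assumes "2 \<le> n"
  shows "3 * card (positive_flips n) = 8 * (n + 1) * 3 ^ (n - 2)"
proof -
  have fiber: "bij_betw (vertex_code n) {\<mu>. flippable n \<mu> f \<and> \<mu> (3 * snd f - 3) = 1}
      (flip_codes n (fst f) (snd f))" if "f \<in> faces n" for f
    using bij_betw_vertex_code_flippable[of "fst f" "snd f" n] that by simp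
  have "finite (flip_codes n (fst f) (snd f))" for f
    by (simp add: flip_codes_def finite_PiE allowed_codes_def)
  then have "finite {\<mu>. flippable n \<mu> f \<and> \<mu> (3 * snd f - 3) = 1}" if "f \<in> faces n" for f
    using bij_betw_finite[OF fiber[OF that]] by simp
  moreover have "finite (faces n)"
    by (simp add: faces_def)
  ultimately have "card (positive_flips n) =
      (\<Sum>f\<in>faces n. card {\<mu>. flippable n \<mu> f \<and> \<mu> (3 * snd f - 3) = 1})"
    unfolding positive_flips_def by (simp add: card_SigmaI)
  also have "\<dots> = (\<Sum>f\<in>faces n. card (flip_codes n (fst f) (snd f)))"
    using fiber by (intro sum.cong refl) (rule bij_betw_same_card)
  finally have "3 * card (positive_flips n) = (\<Sum>f\<in>faces n. 3 * card (flip_codes n (fst f) (snd f)))"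
    by (simp add: sum_distrib_left)
  also have "\<dots> = (\<Sum>f\<in>faces n. (if snd f = 1 \<or> snd f = n then 6 else 4) * 3 ^ (n - 2))"
    using card_flip_codes[OF _ assms] by (intro sum.cong refl) auto
  also have "\<dots> = (\<Sum>(i, j)\<in>{1, 2 :: nat} \<times> {1..n}. (if j = 1 \<or> j = n then 6 else 4) * 3 ^ (n - 2))"
    by (simp add: faces_def case_prod_beta)
  also have "\<dots> = 2 * (\<Sum>j=1..n. (if j = 1 \<or> j = n then 6 else 4) * 3 ^ (n - 2))"
    by (simp add: sum.cartesian_product[symmetric] mult_2)
  also have "\<dots> = 8 * (n + 1) * 3 ^ (n - 2)"
    using sum_end_weights[OF assms] by (simp add: sum_distrib_right[symmetric])
  finally show ?thesis .
qed

(* The column is read off the only border crease divisible by 3, the row off the residue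
   (2 in row 1, 1 in row 2) of another border crease, which exists as n >= 2. *)
lemma inj_on_face_border:
  assumes "2 \<le> n"
  shows "inj_on (face_border n) (faces n)"
proof (rule inj_onI, clarify)
  fix i j i' j'
  assume f: "(i, j) \<in> faces n" and g: "(i', j') \<in> faces n"
    and border: "face_border n (i, j) = face_border n (i', j')"
  have ij: "1 \<le> j" "j \<le> n" "i = 1 \<or> i = 2" and ij': "1 \<le> j'" "j' \<le> n" "i' = 1 \<or> i' = 2"
    using f g by (auto simp: faces_def)
  note mem = border[unfolded set_eq_iff mem_face_border_iff[OF f] mem_face_border_iff[OF g], rule_format]
  show "i = i' \<and> j = j'"
  proof
    show "j = j'"
      using mem[of "3*j - 3"] ij ij' by (auto split: if_splits; presburger)
    show "i = i'"
    proof (rule ccontr)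
      assume "i \<noteq> i'"
      then show False
        using \<open>j = j'\<close> mem[of "3*j - 4"] mem[of "3*j - 2"] mem[of 2] mem[of 4] ij ij' assms
        by (cases "2 \<le> j") (auto split: if_splits; presburger)+
    qed
  qed
qed

lemma inj_on_face_flip:
  assumes "\<mu> \<in> mv_assignments n" and "2 \<le> n"
  shows "inj_on (face_flip n \<mu>) (faces n)"
proof (rule inj_onI)
  fix f g assume f: "f \<in> faces n" and g: "g \<in> faces n" and flips: "face_flip n \<mu> f = face_flip n \<mu> g"
  have "c \<in> face_border n f \<longleftrightarrow> c \<in> face_border n g" for c
  proof (cases "c \<in> creases n")
    case True
    then have "\<mu> c \<noteq> - \<mu> c"
      using assms(1) by (auto simp: mv_assignments_def)
    then show ?thesis
      using fun_cong[OF flips, of c] by (auto simp: face_flip_def split: if_splits)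
  next
    case False
    then show ?thesis
      using face_border_subset_creases f g by blast
  qed
  then show "f = g"
    using inj_onD[OF inj_on_face_border[OF assms(2)] _ f g] by blast
qed

lemma OFG_edges_eq_image: "OFG_edges n = (\<lambda>(f, \<mu>). {\<mu>, face_flip n \<mu> f}) ` positive_flips n"
proof (intro equalityI subsetI)
  fix e assume "e \<in> OFG_edges n"
  then obtain \<mu> i j where e: "e = {\<mu>, face_flip n \<mu> (i, j)}" and fl: "flippable n \<mu> (i, j)"
    unfolding OFG_edges_def by auto
  then have f: "(i, j) \<in> faces n" and lv: "locally_valid n \<mu>"
    by (simp_all add: flippable_def)
  have "3*j - 3 \<in> creases n"
    using face_border_subset_creases[OF f] spine_crease_mem_face_border[OF f] by blast
  then have "\<mu> (3*j - 3) \<in> {1, -1}"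
    by (rule locally_valid_crease_value[OF lv])
  moreover have "face_flip n \<mu> (i, j) (3*j - 3) = - \<mu> (3*j - 3)"
    using spine_crease_mem_face_border[OF f] by (simp add: face_flip_def)
  moreover have "flippable n (face_flip n \<mu> (i, j)) (i, j)"
    using fl by (simp add: flippable_def)
  ultimately have "((i, j), \<mu>) \<in> positive_flips n \<or> ((i, j), face_flip n \<mu> (i, j)) \<in> positive_flips n"
    using fl f by (auto simp: positive_flips_def)
  then show "e \<in> (\<lambda>(f, \<mu>). {\<mu>, face_flip n \<mu> f}) ` positive_flips n"
  proof (elim disjE)
    assume "((i, j), \<mu>) \<in> positive_flips n"
    then show ?thesis
      by (rule rev_image_eqI) (simp add: e)
  next
    assume "((i, j), face_flip n \<mu> (i, j)) \<in> positive_flips n"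
    then show ?thesis
      by (rule rev_image_eqI) (auto simp: e)
  qed
qed (auto simp: OFG_edges_def positive_flips_def)

lemma inj_on_edge_of_positive_flip:
  assumes "2 \<le> n"
  shows "inj_on (\<lambda>(f, \<mu>). {\<mu>, face_flip n \<mu> f}) (positive_flips n)"
proof (rule inj_onI, clarify)
  fix f \<mu> g \<nu>
  assume "(f, \<mu>) \<in> positive_flips n" "(g, \<nu>) \<in> positive_flips n"
    and edge: "{\<mu>, face_flip n \<mu> f} = {\<nu>, face_flip n \<nu> g}"
  then have f: "f \<in> faces n" and g: "g \<in> faces n"
    and lv: "locally_valid n \<mu>" and pos: "\<mu> (3 * snd f - 3) = 1" "\<nu> (3 * snd g - 3) = 1"
    by (auto simp: positive_flips_def flippable_def)
  have mv: "\<mu> \<in> mv_assignments n"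
    using lv by (simp add: locally_valid_def)
  show "f = g \<and> \<mu> = \<nu>"
  proof (cases "\<mu> = \<nu>")
    case True
    then have "face_flip n \<mu> f = face_flip n \<mu> g"
      using edge by (auto simp: doubleton_eq_iff)
    then show ?thesis
      using True inj_onD[OF inj_on_face_flip[OF mv assms] _ f g] by blast
  next
    case False
    then have "\<nu> = face_flip n \<mu> f" and "\<mu> = face_flip n \<nu> g"
      using edge by (auto simp: doubleton_eq_iff)
    then have "face_flip n \<mu> f = face_flip n \<mu> g"
      by simp
    then have "f = g"
      using inj_onD[OF inj_on_face_flip[OF mv assms] _ f g] by blast
    then have "\<nu> (3 * snd f - 3) = - \<mu> (3 * snd f - 3)"
      using \<open>\<nu> = face_flip n \<mu> f\<close> spine_crease_mem_face_border[of "fst f" "snd f" n] f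
      by (simp add: face_flip_def)
    then show ?thesis
      using pos \<open>f = g\<close> by simp
  qed
qed

theorem theorem3p2:
  fixes n :: nat
  assumes "n \<ge> 2"
  shows "real (card (OFG_edges n)) = 8 * real (n + 1) * (3::real) powi (int n - 3)"
proof -
  obtain m where n: "n = m + 2"
    using assms by (metis le_add_diff_inverse2)
  have "3 * card (OFG_edges n) = 8 * (n + 1) * 3 ^ m"
    using card_positive_flips[OF assms] card_image[OF inj_on_edge_of_positive_flip[OF assms]]
    by (simp add: OFG_edges_eq_image n)
  then have "real (card (OFG_edges n)) = 8 * real (n + 1) * 3 ^ m / 3"
    by (metis of_nat_mult of_nat_numeral of_nat_power nonzero_mult_div_cancel_left zero_neq_numeral)
  moreover have "(3::real) powi (int n - 3) = 3 ^ m / 3"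
    by (simp add: n power_int_diff)
  ultimately show ?thesis
    by (simp only: times_divide_eq_right)
qed

end
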